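(* In the transactional panorama model with the lenses and metrics described in the context, $I(\mathrm{LCMB}) \ge I(\mathrm{LCNB}) = I(\mathrm{ICNB})$.
   Context: A view graph is a DAG on a set $N$ of nodes (source data and views). Write transactions are processed one at a time; write transaction $w^{t_i}$ creates version $G^{t_i}$ with state set $V^{t_i}$ containing, for each node $n_k$, either its computed new result, a placeholder $UC_k^{t_i}$ if $w^{t_i}$ updates $n_k$ but has not yet computed it, or its result from the previous version if $n_k$ is not updated. A version is committed once all its new results are computed; at any time there is the committed graph (most recently committed version, no UCs) and the latest graph (version of the most recent write transaction). Read transactions $r^{s_1},\dots,r^{s_m}$ each read the views in the current viewport and return immediately a set $H^{s_i}$ of states (results or UCs); $Time(r^{s_i})$ is its return time. A returned state's timestamp is that of its version. Lenses: LCNB returns the viewport states from the more recent of the committed and latest graphs that has zero UCs for the viewport. LCMB: if reading either the committed or the latest graph preserves monotonicity (no view gets a state with smaller timestamp than previously read), behave like LCNB; otherwise read the latest graph. ICNB returns, for each view independently, its most recently computed result. Invisibility for $R=\{r^{s_1},\dots,r^{s_m}\}$: $I(R)=\sum_{i=1}^{m-1}|H^{s_i}_{UC}|\,(Time(r^{s_{i+1}})-Time(r^{s_i}))$, where $H^{s_i}_{UC}$ is the set of UCs in $H^{s_i}$. $I(A)$ denotes invisibility under lens $A$; lenses are compared on the same write transactions, the same order of computing new view results, and the same sequence of read transactions. *)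

theory Defs
  imports Complex_Main
begin

(* A state of a node in some version: either a computed result or a
   placeholder UC.  The argument is the timestamp (index of the version
   whose write transaction produced this state); version 0 is the initial
   version, whose results are all computed. *)
datatype state = Res nat | UC nat

fun ts :: "state \<Rightarrow> nat" where
  "ts (Res t) = t" | "ts (UC t) = t"

fun is_UC :: "state \<Rightarrow> bool" where
  "is_UC (Res _) = False" | "is_UC (UC _) = True"

(* An execution: view graph (DAG), write transactions 1..n_writes,
   the set of nodes each write updates, its arrival time, and the time at
   which each new result is computed (this fixes the order of computation). *)
record 'n exec =
  g_nodes  :: "'n set"
  g_edges  :: "('n \<times> 'n) set"
  n_writes :: nat
  w_upd    :: "nat \<Rightarrow> 'n set"
  w_arr    :: "nat \<Rightarrow> real"
  w_cmp    :: "nat \<Rightarrow> 'n \<Rightarrow> real"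

definition wf_exec :: "'n exec \<Rightarrow> bool" where
  "wf_exec E \<longleftrightarrow>
     finite (g_nodes E) \<and> g_edges E \<subseteq> g_nodes E \<times> g_nodes E \<and> acyclic (g_edges E) \<and>
     (\<forall>t\<in>{1..n_writes E}. w_upd E t \<subseteq> g_nodes E) \<and>
     (\<forall>t\<in>{1..n_writes E}. \<forall>t'\<in>{1..n_writes E}. t < t' \<longrightarrow> w_arr E t < w_arr E t') \<and>
     (\<forall>t\<in>{1..n_writes E}. \<forall>k\<in>w_upd E t. w_arr E t \<le> w_cmp E t k)"

definition last_upd :: "'n exec \<Rightarrow> nat \<Rightarrow> 'n \<Rightarrow> nat" where
  "last_upd E t k = (if \<exists>t'\<in>{1..t}. k \<in> w_upd E t' then Max {t'\<in>{1..t}. k \<in> w_upd E t'} else 0)"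

definition state_at :: "'n exec \<Rightarrow> nat \<Rightarrow> 'n \<Rightarrow> real \<Rightarrow> state" where
  "state_at E t k tau = (let t' = last_upd E t k in
      if t' = 0 \<or> w_cmp E t' k \<le> tau then Res t' else UC t')"

definition latest :: "'n exec \<Rightarrow> real \<Rightarrow> nat" where
  "latest E tau = Max (insert 0 {t\<in>{1..n_writes E}. w_arr E t \<le> tau})"

definition ver_done :: "'n exec \<Rightarrow> nat \<Rightarrow> real \<Rightarrow> bool" where
  "ver_done E t tau \<longleftrightarrow> t = 0 \<or> (w_arr E t \<le> tau \<and> (\<forall>k\<in>w_upd E t. w_cmp E t k \<le> tau))"

(* most recently committed version (versions are committed in order) *)
definition committed :: "'n exec \<Rightarrow> real \<Rightarrow> nat" where
  "committed E tau = Max {t\<in>{0..n_writes E}. \<forall>t'\<le>t. ver_done E t' tau}"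

definition lcnb_ver :: "'n exec \<Rightarrow> real \<Rightarrow> 'n set \<Rightarrow> nat" where
  "lcnb_ver E tau V = (if \<forall>k\<in>V. \<not> is_UC (state_at E (latest E tau) k tau)
                       then latest E tau else committed E tau)"

definition preserves_mono :: "'n exec \<Rightarrow> ('n \<Rightarrow> nat option) \<Rightarrow> real \<Rightarrow> 'n set \<Rightarrow> nat \<Rightarrow> bool" where
  "preserves_mono E prev tau V t \<longleftrightarrow>
     (\<forall>k\<in>V. \<forall>p. prev k = Some p \<longrightarrow> p \<le> ts (state_at E t k tau))"

definition lcmb_choice :: "'n exec \<Rightarrow> ('n \<Rightarrow> nat option) \<Rightarrow> real \<Rightarrow> 'n set \<Rightarrow> nat" where
  "lcmb_choice E prev tau V =
     (if preserves_mono E prev tau V (committed E tau) \<and> preserves_mono E prev tau V (latest E tau)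
      then lcnb_ver E tau V else latest E tau)"

record 'n reads =
  n_reads :: nat
  r_time  :: "nat \<Rightarrow> real"
  r_vp    :: "nat \<Rightarrow> 'n set"

definition wf_reads :: "'n exec \<Rightarrow> 'n reads \<Rightarrow> bool" where
  "wf_reads E R \<longleftrightarrow>
     (\<forall>i<n_reads R. r_vp R i \<subseteq> g_nodes E) \<and>
     (\<forall>i j. i \<le> j \<and> j < n_reads R \<longrightarrow> r_time R i \<le> r_time R j)"

fun lcmb_prev :: "'n exec \<Rightarrow> 'n reads \<Rightarrow> nat \<Rightarrow> 'n \<Rightarrow> nat option" where
  "lcmb_prev E R 0 = (\<lambda>k. None)"
| "lcmb_prev E R (Suc i) = (\<lambda>k.
     if k \<in> r_vp R i then
       (let s = ts (state_at E (lcmb_choice E (lcmb_prev E R i) (r_time R i) (r_vp R i)) k (r_time R i))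
        in case lcmb_prev E R i k of None \<Rightarrow> Some s | Some p \<Rightarrow> Some (max p s))
     else lcmb_prev E R i k)"

definition icnb_state :: "'n exec \<Rightarrow> real \<Rightarrow> 'n \<Rightarrow> state" where
  "icnb_state E tau k = (let C = {t\<in>{1..n_writes E}. k \<in> w_upd E t \<and> w_cmp E t k \<le> tau} in
     if C = {} then Res 0
     else Res (GREATEST t. t \<in> C \<and> (\<forall>t''\<in>C. w_cmp E t'' k \<le> w_cmp E t k)))"

datatype lens = LCNB | LCMB | ICNB

fun read_state :: "lens \<Rightarrow> 'n exec \<Rightarrow> 'n reads \<Rightarrow> nat \<Rightarrow> 'n \<Rightarrow> state" where
  "read_state LCNB E R i k = state_at E (lcnb_ver E (r_time R i) (r_vp R i)) k (r_time R i)"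
| "read_state LCMB E R i k =
     state_at E (lcmb_choice E (lcmb_prev E R i) (r_time R i) (r_vp R i)) k (r_time R i)"
| "read_state ICNB E R i k = icnb_state E (r_time R i) k"

definition invisibility :: "lens \<Rightarrow> 'n exec \<Rightarrow> 'n reads \<Rightarrow> real" where
  "invisibility L E R =
     (\<Sum>i<n_reads R - 1. real (card {k\<in>r_vp R i. is_UC (read_state L E R i k)})
                          * (r_time R (Suc i) - r_time R i))"

end

theory Submission
  imports Defs
begin

text \<open>LCNB reads the latest graph only when it has no UC in the viewport, and otherwise
  the committed graph, which has no UCs at all since every version up to it is complete.
  ICNB returns computed results only. So both lenses have invisibility 0, whereas
  invisibility is a sum of nonnegative terms for any lens because read times are
  nondecreasing.\<close>

lemma committed_ver_done:
  assumes "t \<le> committed E tau"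
  shows "ver_done E t tau"
proof -
  let ?S = "{t\<in>{0..n_writes E}. \<forall>t'\<le>t. ver_done E t' tau}"
  have "0 \<in> ?S" by (simp add: ver_done_def)
  then have "committed E tau \<in> ?S"
    unfolding committed_def by (intro Max_in) auto
  with assms show ?thesis by auto
qed

lemma last_upd_mem:
  assumes "last_upd E t k \<noteq> 0"
  shows "last_upd E t k \<in> {1..t} \<and> k \<in> w_upd E (last_upd E t k)"
proof -
  let ?A = "{t'\<in>{1..t}. k \<in> w_upd E t'}"
  from assms have "?A \<noteq> {}" unfolding last_upd_def by (auto split: if_splits)
  then have "Max ?A \<in> ?A" by (intro Max_in) auto
  with \<open>?A \<noteq> {}\<close> show ?thesis unfolding last_upd_def by auto
qed

lemma state_at_committed_not_UC: "\<not> is_UC (state_at E (committed E tau) k tau)"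
proof (cases "last_upd E (committed E tau) k = 0")
  case False
  let ?t = "last_upd E (committed E tau) k"
  from last_upd_mem[OF False] have "?t \<le> committed E tau" and "k \<in> w_upd E ?t" by auto
  with committed_ver_done[of ?t E tau] False have "w_cmp E ?t k \<le> tau"
    unfolding ver_done_def by auto
  then show ?thesis unfolding state_at_def by simp
qed (simp add: state_at_def)

lemma read_state_LCNB_not_UC:
  assumes "k \<in> r_vp R i"
  shows "\<not> is_UC (read_state LCNB E R i k)"
  using assms by (simp add: lcnb_ver_def state_at_committed_not_UC)

lemma read_state_ICNB_not_UC: "\<not> is_UC (read_state ICNB E R i k)"
  by (simp add: icnb_state_def Let_def)

lemma invisibility_eq_0_if_no_UC:
  assumes "\<And>i k. k \<in> r_vp R i \<Longrightarrow> \<not> is_UC (read_state L E R i k)"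
  shows "invisibility L E R = 0"
proof -
  have no_UC: "{k\<in>r_vp R i. is_UC (read_state L E R i k)} = {}" for i
    using assms by blast
  show ?thesis unfolding invisibility_def no_UC by simp
qed

lemma invisibility_nonneg:
  assumes "wf_reads E R"
  shows "0 \<le> invisibility L E R"
  unfolding invisibility_def
proof (rule sum_nonneg)
  fix i assume "i \<in> {..<n_reads R - 1}"
  with assms have "r_time R i \<le> r_time R (Suc i)" unfolding wf_reads_def by auto
  then show "0 \<le> real (card {k\<in>r_vp R i. is_UC (read_state L E R i k)})
                  * (r_time R (Suc i) - r_time R i)" by simp
qed

theorem theorem2p10:
  fixes E :: "'n exec" and R :: "'n reads"
  assumes "wf_exec E" and "wf_reads E R"
  shows "invisibility LCMB E R \<ge> invisibility LCNB E R \<and>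
         invisibility LCNB E R = invisibility ICNB E R"
proof -
  have "invisibility LCNB E R = 0"
    using read_state_LCNB_not_UC by (rule invisibility_eq_0_if_no_UC)
  moreover have "invisibility ICNB E R = 0"
    by (intro invisibility_eq_0_if_no_UC read_state_ICNB_not_UC)
  moreover have "0 \<le> invisibility LCMB E R"
    using assms(2) by (rule invisibility_nonneg)
  ultimately show ?thesis by simp
qed

end
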